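(* Let $\{\mathbf{G}_k\}_{k\ge1}$ be (any realization of) the observed chain of the Sampled Moran Genealogy Process with population size $n$, sample times $t_1<t_2<\cdots$ and attachment times $\{a_k\}_{k\ge2}$, and define $m(j,k)$ as below. Then for every $k\ge2$, \[ \sum_{j=1}^{k-1}\ \sum_{e\in\mathrm{live}(\mathbf{G}_j)}\log\frac{n-\ell_j(e)}{n-\ell_j(e)-1}\,\mathbf 1\{e>a_{j+1}\}=\sum_{j=1}^{k-1}\log\frac{n}{n-m(j,k)}. \]
   Context: In the Sampled Moran Genealogy Process, a population of constant size $n$ evolves under Moran dynamics (at rate-$\mu$ events an ordered pair of distinct individuals is chosen uniformly, the first dies and the second gives birth), and at each deterministic time $t_i$ ($t_1<t_2<\cdots$) one living individual is sampled. The observed genealogy $\mathbf{G}_k$ is the genealogy formed by the ancestral lineages of samples $1,\dots,k$ (sample $i$'s lineage traced back from $t_i$). For $j\ge2$ the attachment time $a_j\le t_{j-1}$ is the most recent time $s$ at which the ancestor at time $s$ of sample $j$ coincides with the ancestor-or-self at time $s$ of some sample $i<j$ with $t_i\ge s$; $a_j$ is either a sample time (direct descent) or not a sample time (a branch point). Sample $i\le k$ is dead in $\mathbf{G}_k$ if $a_j=t_i$ for some $i<j\le k$, live otherwise; $\mathrm{live}(\mathbf{G}_k)$ is the set of sample times of live samples. Branch points of $\mathbf{G}_k$: the $a_j$, $2\le j\le k$, that are not sample times. $\ell_k(t)=|\{e\in\mathrm{live}(\mathbf{G}_k):e>t\}|-|\{\text{branch points }b\text{ of }\mathbf{G}_k:b>t\}|$.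 For $j\le k$, $m(j,k)=|\{i: j<i\le k,\ a_i<t_j,\ \text{and } a_r\ne t_j \text{ for all } r<i\}|$, the number of samples attaching to the left of $t_j$ before sample $j$ dies (or before $k$ is reached). *)

theory Defs
  imports Complex_Main
begin

text \<open>Individuals alive at a time are identified by their slot in 0..<n.
  The Moran events form a locally finite set E of event times; at an event time tau
  the individual in slot dth tau dies and is replaced by an offspring of the individual
  in slot bth tau.  Sample i (i >= 1) is the individual in slot sig i at time t i.
  Convention at an event time tau: the population at time tau is the pre-event one.\<close>

text \<open>Slot at time s of the ancestor of the individual in slot x at time t (s <= t):
  trace the events in [s,t) backwards, latest first.\<close>
definition lin :: "real set \<Rightarrow> (real \<Rightarrow> nat) \<Rightarrow> (real \<Rightarrow> nat) \<Rightarrow> nat \<Rightarrow> real \<Rightarrow> real \<Rightarrow> nat" where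
  "lin E dth bth x tt s =
     fold (\<lambda>\<tau> c. if c = dth \<tau> then bth \<tau> else c)
          (rev (sorted_list_of_set (E \<inter> {s..<tt}))) x"

definition anc :: "real set \<Rightarrow> (real \<Rightarrow> nat) \<Rightarrow> (real \<Rightarrow> nat) \<Rightarrow> (nat \<Rightarrow> real) \<Rightarrow> (nat \<Rightarrow> nat) \<Rightarrow> nat \<Rightarrow> real \<Rightarrow> nat" where
  "anc E dth bth t sig i s = lin E dth bth (sig i) (t i) s"

definition meets :: "real set \<Rightarrow> (real \<Rightarrow> nat) \<Rightarrow> (real \<Rightarrow> nat) \<Rightarrow> (nat \<Rightarrow> real) \<Rightarrow> (nat \<Rightarrow> nat) \<Rightarrow> nat \<Rightarrow> real \<Rightarrow> bool" where
  "meets E dth bth t sig j s =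
     (\<exists>i. 1 \<le> i \<and> i < j \<and> s \<le> t i \<and> anc E dth bth t sig j s = anc E dth bth t sig i s)"

definition attach :: "real set \<Rightarrow> (real \<Rightarrow> nat) \<Rightarrow> (real \<Rightarrow> nat) \<Rightarrow> (nat \<Rightarrow> real) \<Rightarrow> (nat \<Rightarrow> nat) \<Rightarrow> nat \<Rightarrow> real" where
  "attach E dth bth t sig j = (GREATEST s. meets E dth bth t sig j s)"

definition is_sample_time :: "(nat \<Rightarrow> real) \<Rightarrow> real \<Rightarrow> bool" where
  "is_sample_time t x = (\<exists>i. 1 \<le> i \<and> x = t i)"

definition live :: "real set \<Rightarrow> (real \<Rightarrow> nat) \<Rightarrow> (real \<Rightarrow> nat) \<Rightarrow> (nat \<Rightarrow> real) \<Rightarrow> (nat \<Rightarrow> nat) \<Rightarrow> nat \<Rightarrow> real set" where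
  "live E dth bth t sig k =
     {t i | i. 1 \<le> i \<and> i \<le> k \<and> \<not> (\<exists>j. i < j \<and> j \<le> k \<and> attach E dth bth t sig j = t i)}"

definition branch_pts :: "real set \<Rightarrow> (real \<Rightarrow> nat) \<Rightarrow> (real \<Rightarrow> nat) \<Rightarrow> (nat \<Rightarrow> real) \<Rightarrow> (nat \<Rightarrow> nat) \<Rightarrow> nat \<Rightarrow> real set" where
  "branch_pts E dth bth t sig k =
     {attach E dth bth t sig j | j. 2 \<le> j \<and> j \<le> k \<and> \<not> is_sample_time t (attach E dth bth t sig j)}"

definition ell :: "real set \<Rightarrow> (real \<Rightarrow> nat) \<Rightarrow> (real \<Rightarrow> nat) \<Rightarrow> (nat \<Rightarrow> real) \<Rightarrow> (nat \<Rightarrow> nat) \<Rightarrow> nat \<Rightarrow> real \<Rightarrow> int" where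
  "ell E dth bth t sig k x =
     int (card {e \<in> live E dth bth t sig k. e > x}) - int (card {b \<in> branch_pts E dth bth t sig k. b > x})"

definition mcount :: "real set \<Rightarrow> (real \<Rightarrow> nat) \<Rightarrow> (real \<Rightarrow> nat) \<Rightarrow> (nat \<Rightarrow> real) \<Rightarrow> (nat \<Rightarrow> nat) \<Rightarrow> nat \<Rightarrow> nat \<Rightarrow> nat" where
  "mcount E dth bth t sig j k =
     card {i. j < i \<and> i \<le> k \<and> attach E dth bth t sig i < t j \<and>
              (\<forall>r. 2 \<le> r \<and> r < i \<longrightarrow> attach E dth bth t sig r \<noteq> t j)}"

end

theory Submission
  imports Defs
begin

text \<open>Regroup the left-hand side by sample instead of by step. The term of sample i at step j
  is nonzero exactly when i is still live in G_j and sample j+1 attaches to the left of t_i,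
  i.e. when j+1 is one of the samples counted by m(i,k). The lineages of G_j crossing a time x
  are that of sample 1 and one for each p \<le> j with a_p \<le> x < t_p; as attachment times are
  pairwise distinct, ell_j(t_i) is therefore the number c of earlier such attachments to the left
  of t_i. So the terms of sample i are ln ((n - c) / (n - c - 1)) for c = 0, ..., m(i,k) - 1, and
  they telescope to ln (n / (n - m(i,k))). Finally m(i,k) < n because sample i and the samples
  attaching to the left of t_i have pairwise distinct ancestors at time t_i.\<close>

lemma sorted_list_of_set_Un_less:
  fixes A B :: "'a::linorder set"
  assumes "finite A" "finite B" "\<forall>a\<in>A. \<forall>b\<in>B. a < b"
  shows "sorted_list_of_set (A \<union> B) = sorted_list_of_set A @ sorted_list_of_set B"
proof -
  let ?xs = "sorted_list_of_set A @ sorted_list_of_set B"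
  have "sorted_wrt (<) ?xs" unfolding sorted_wrt_append using assms by simp
  moreover have "set ?xs = A \<union> B" using assms by simp
  ultimately show ?thesis using strict_sorted_equal[of ?xs "sorted_list_of_set (A \<union> B)"] assms by simp
qed

lemma card_above_insert:
  fixes A :: "'a::linorder set"
  assumes "finite A" "b \<notin> A"
  shows "int (card {e \<in> insert b A. x < e}) = int (card {e \<in> A. x < e}) + (if x < b then 1 else 0)"
proof -
  have "{e \<in> insert b A. x < e} = (if x < b then insert b {e \<in> A. x < e} else {e \<in> A. x < e})"
    by auto
  then show ?thesis using assms by simp
qed

lemma card_above_remove:
  fixes A :: "'a::linorder set"
  assumes "finite A" "a \<in> A"
  shows "int (card {e \<in> A - {a}. x < e}) = int (card {e \<in> A. x < e}) - (if x < a then 1 else 0)"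
proof -
  have "{e \<in> A - {a}. x < e} = {e \<in> A. x < e} - {a}" by auto
  moreover have "card {e \<in> A. x < e} > 0" if "x < a"
    using assms that by (auto simp: card_gt_0_iff)
  ultimately show ?thesis using assms by (simp add: card_Diff_singleton_if of_nat_diff Suc_le_eq)
qed

lemma sum_rank:
  fixes S :: "'a::linorder set"
  assumes "finite S"
  shows "(\<Sum>p\<in>S. h (card {q\<in>S. q < p})) = (\<Sum>c<card S. h c)"
  using assms
proof (induction "card S" arbitrary: S)
  case 0
  then show ?case by simp
next
  case (Suc m S)
  define M where "M = Max S"
  define S' where "S' = S - {M}"
  have "M \<in> S" unfolding M_def using Suc by (metis Max_in card.empty nat.distinct(1))
  then have S': "finite S'" "card S' = m" "S = insert M S'" "M \<notin> S'"
    unfolding S'_def using Suc by auto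
  have less_M: "q < M" if "q \<in> S'" for q
    using that Suc.prems unfolding S'_def M_def by (simp add: order.not_eq_order_implies_strict)
  have "{q\<in>S. q < p} = {q\<in>S'. q < p}" if "p \<in> S'" for p
    using less_M[OF that] S'(3) by auto
  then have "(\<Sum>p\<in>S'. h (card {q\<in>S. q < p})) = (\<Sum>c<m. h c)"
    using Suc.hyps(1)[OF S'(2)[symmetric] S'(1)] S'(2) by simp
  moreover have "{q\<in>S. q < M} = S'" using less_M S'(3) by auto
  ultimately show ?case using S' by (simp add: add.commute)
qed

lemma sum_ln_ratio_telescope:
  fixes x :: real
  assumes "real m < x"
  shows "(\<Sum>c<m. ln ((x - real c) / (x - real c - 1))) = ln (x / (x - real m))"
proof -
  have "(\<Sum>c<m. ln ((x - real c) / (x - real c - 1))) = (\<Sum>c<m. ln (x - real c) - ln (x - real (Suc c)))"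
    using assms by (intro sum.cong) (auto simp: ln_divide_pos diff_diff_add)
  also have "\<dots> = ln x - ln (x - real m)"
    by (subst sum_lessThan_telescope') simp
  also have "\<dots> = ln (x / (x - real m))"
    using assms by (simp add: ln_divide_pos)
  finally show ?thesis .
qed

locale sampled_moran =
  fixes n :: nat and t :: "nat \<Rightarrow> real" and E :: "real set"
    and dth bth :: "real \<Rightarrow> nat" and sig :: "nat \<Rightarrow> nat"
  assumes t_incr: "\<forall>i\<ge>1. t i < t (Suc i)"
    and E_locfin: "\<forall>a b. finite (E \<inter> {a..b})"
    and E_pairs: "\<forall>\<tau>\<in>E. dth \<tau> < n \<and> bth \<tau> < n \<and> dth \<tau> \<noteq> bth \<tau>"
    and sig_ok: "\<forall>i\<ge>1. sig i < n"
    and t_notE: "\<forall>i\<ge>1. t i \<notin> E"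
    and attach_ex: "\<forall>j\<ge>2. \<exists>s. meets E dth bth t sig j s"
begin

abbreviation "lineage \<equiv> lin E dth bth"
abbreviation "ancestor \<equiv> anc E dth bth t sig"
abbreviation "meets_at \<equiv> meets E dth bth t sig"
abbreviation "att \<equiv> attach E dth bth t sig"
abbreviation "lives \<equiv> live E dth bth t sig"
abbreviation "branches \<equiv> branch_pts E dth bth t sig"
abbreviation "lineages \<equiv> ell E dth bth t sig"

definition jump :: "real \<Rightarrow> nat \<Rightarrow> nat" where
  "jump \<tau> x = (if \<tau> \<in> E \<and> x = dth \<tau> then bth \<tau> else x)"

lemma jump_eq_jumpD: "jump \<tau> x = jump \<tau> y \<Longrightarrow> x \<noteq> y \<Longrightarrow> {x, y} = {dth \<tau>, bth \<tau>}"
  unfolding jump_def by (auto split: if_splits)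

lemma t_less: "1 \<le> i \<Longrightarrow> i < j \<Longrightarrow> t i < t j"
proof (induction j)
  case (Suc j)
  then show ?case
    using t_incr by (metis less_Suc_eq less_trans linorder_not_le)
qed simp

lemma t_less_iff: "1 \<le> i \<Longrightarrow> 1 \<le> j \<Longrightarrow> t i < t j \<longleftrightarrow> i < j"
  by (metis linorder_neq_iff not_less_iff_gr_or_eq t_less)

lemma t_le_iff: "1 \<le> i \<Longrightarrow> 1 \<le> j \<Longrightarrow> t i \<le> t j \<longleftrightarrow> i \<le> j"
  by (meson linorder_not_le t_less_iff)

lemma t_eq_iff: "1 \<le> i \<Longrightarrow> 1 \<le> j \<Longrightarrow> t i = t j \<longleftrightarrow> i = j"
  by (metis order_less_irrefl t_less_iff linorder_neq_iff)

lemma finite_events: "finite (E \<inter> {s..<u})"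
  using E_locfin by (meson atLeastLessThan_subseteq_atLeastAtMost_iff finite_subset inf_mono order_refl)

lemma lineage_no_events: "E \<inter> {s..<u} = {} \<Longrightarrow> lineage x u s = x"
  unfolding lin_def by simp

lemma lineage_split:
  assumes "s \<le> v" "v \<le> u"
  shows "lineage x u s = lineage (lineage x u v) v s"
proof -
  have "E \<inter> {s..<u} = (E \<inter> {s..<v}) \<union> (E \<inter> {v..<u})" using assms by auto
  then have "sorted_list_of_set (E \<inter> {s..<u})
      = sorted_list_of_set (E \<inter> {s..<v}) @ sorted_list_of_set (E \<inter> {v..<u})"
    by (simp add: sorted_list_of_set_Un_less finite_events)
  then show ?thesis unfolding lin_def by simp
qed

lemma lineage_single_event:
  assumes "E \<inter> {s..<u} \<subseteq> {s}" "s < u"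
  shows "lineage x u s = jump s x"
proof (cases "s \<in> E")
  case True
  then have "E \<inter> {s..<u} = {s}" using assms by auto
  then show ?thesis unfolding lin_def jump_def using True by simp
qed (use assms in \<open>auto intro: lineage_no_events simp: jump_def\<close>)

lemma lineage_less: "x < n \<Longrightarrow> lineage x u s < n"
proof -
  have "fold (\<lambda>\<tau> c. if c = dth \<tau> then bth \<tau> else c) xs x < n" if "set xs \<subseteq> E" "x < n" for xs x
    using that by (induction xs arbitrary: x) (auto simp: E_pairs)
  then show "x < n \<Longrightarrow> lineage x u s < n" unfolding lin_def by (simp add: finite_events)
qed

lemma ancestor_split: "s \<le> v \<Longrightarrow> v \<le> t i \<Longrightarrow> ancestor i s = lineage (ancestor i v) v s"
  unfolding anc_def by (rule lineage_split)

lemma ancestor_no_events: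
  "s \<le> v \<Longrightarrow> v \<le> t i \<Longrightarrow> E \<inter> {s..<v} = {} \<Longrightarrow> ancestor i s = ancestor i v"
  using ancestor_split lineage_no_events by metis

lemma ancestor_less: "1 \<le> i \<Longrightarrow> ancestor i s < n"
  unfolding anc_def by (simp add: lineage_less sig_ok)

lemma meets_at_dominated:
  assumes "meets_at j s" "s0 \<le> s"
  shows "\<exists>c \<in> E \<inter> {s0..t (j - 1)} \<union> t ` {1..<j}. meets_at j c \<and> s \<le> c"
proof -
  obtain i where i: "1 \<le> i" "i < j" "s \<le> t i" "ancestor j s = ancestor i s"
    using assms(1) unfolding meets_def by auto
  \<comment> \<open>ancestries only change at events, so the meeting persists up to the next event or t i\<close>
  define c where "c = Min (insert (t i) (E \<inter> {s..t i}))"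
  have fin: "finite (E \<inter> {s..t i})" using E_locfin by simp
  have c_in: "c \<in> insert (t i) (E \<inter> {s..t i})"
    unfolding c_def using fin by (intro Min_in) auto
  have c: "s \<le> c" "c \<le> t i"
    unfolding c_def using fin i(3) by auto
  have "c \<le> \<tau>" if "\<tau> \<in> E \<inter> {s..t i}" for \<tau>
    unfolding c_def using fin that by simp
  then have "E \<inter> {s..<c} = {}" using c(2) by fastforce
  moreover have "c \<le> t j" using c(2) t_less[OF i(1,2)] by simp
  ultimately have "ancestor j c = ancestor i c"
    using ancestor_no_events[of s c] c i(4) by metis
  then have "meets_at j c" unfolding meets_def using i c by auto
  moreover have "c \<in> E \<inter> {s0..t (j - 1)} \<union> t ` {1..<j}"
  proof (cases "c = t i")
    case False
    have "t i \<le> t (j - 1)" using i t_le_iff by simp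
    then show ?thesis using c c_in False assms(2) by auto
  qed (use i in auto)
  ultimately show ?thesis using c by blast
qed

lemma attach_greatest:
  assumes "2 \<le> j"
  shows "meets_at j (att j) \<and> (\<forall>s. meets_at j s \<longrightarrow> s \<le> att j)"
proof -
  obtain s0 where s0: "meets_at j s0" using attach_ex assms by blast
  define C where "C = {c \<in> E \<inter> {s0..t (j - 1)} \<union> t ` {1..<j}. meets_at j c}"
  have fin: "finite C"
    unfolding C_def by (rule finite_subset[of _ "E \<inter> {s0..t (j - 1)} \<union> t ` {1..<j}"]) (auto simp: E_locfin)
  obtain c0 where c0: "c0 \<in> C" "s0 \<le> c0"
    using meets_at_dominated[OF s0 order_refl] unfolding C_def by blast
  have bound: "s \<le> Max C" if s: "meets_at j s" for s
  proof (cases "s0 \<le> s")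
    case True
    then obtain c where "c \<in> C" "s \<le> c"
      using meets_at_dominated[OF s True] unfolding C_def by blast
    then show ?thesis using fin by (meson Max_ge order_trans)
  next
    case False
    then show ?thesis using c0 fin by (meson Max_ge order_trans nle_le)
  qed
  have "Max C \<in> C" using fin c0 Max_in by blast
  then have "meets_at j (Max C)" unfolding C_def by simp
  moreover have "att j = Max C"
    unfolding attach_def using bound \<open>meets_at j (Max C)\<close> by (intro Greatest_equality) auto
  ultimately show ?thesis using bound by simp
qed

lemma meets_attach: "2 \<le> j \<Longrightarrow> meets_at j (att j)"
  using attach_greatest by blast

lemma meets_le_attach: "2 \<le> j \<Longrightarrow> meets_at j s \<Longrightarrow> s \<le> att j"
  using attach_greatest by blast

lemma attach_le: "2 \<le> j \<Longrightarrow> att j \<le> t (j - 1)"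
proof -
  assume "2 \<le> j"
  then obtain i where "1 \<le> i" "i < j" "att j \<le> t i"
    using meets_attach unfolding meets_def by blast
  moreover have "t i \<le> t (j - 1)" using calculation t_le_iff by simp
  ultimately show ?thesis by simp
qed

lemma attach_less: "2 \<le> j \<Longrightarrow> j \<le> p \<Longrightarrow> att j < t p"
  using attach_le t_less[of "j - 1" p] by fastforce

lemma ancestor_ne_after_attach:
  assumes "2 \<le> p" "att p < s" "1 \<le> q" "q < p" "s \<le> t q"
  shows "ancestor p s \<noteq> ancestor q s"
proof
  assume "ancestor p s = ancestor q s"
  then have "meets_at p s" unfolding meets_def using assms(3-5) by auto
  then show False using meets_le_attach[OF assms(1)] assms(2) by fastforce
qed

lemma ancestors_just_after:
  assumes "1 \<le> N" "c < t N"
  obtains s where "c < s" and "\<And>q. 1 \<le> q \<Longrightarrow> q \<le> N \<Longrightarrow> c < t q \<Longrightarrow> s \<le> t q"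
    and "\<And>q. 1 \<le> q \<Longrightarrow> q \<le> N \<Longrightarrow> c < t q \<Longrightarrow> ancestor q c = jump c (ancestor q s)"
proof -
  define F where "F = {x \<in> E \<inter> {c..t N} \<union> t ` {1..N}. c < x}"
  have fin: "finite F"
    unfolding F_def by (rule finite_subset[of _ "E \<inter> {c..t N} \<union> t ` {1..N}"]) (auto simp: E_locfin)
  have "t N \<in> F" unfolding F_def using assms by auto
  define s where "s = Min F"
  have le_F: "s \<le> x" if "x \<in> F" for x unfolding s_def using fin that by simp
  have "c < s" unfolding s_def using fin \<open>t N \<in> F\<close> Min_gr_iff[of F c] F_def by blast
  have after: "s \<le> t q" if "1 \<le> q" "q \<le> N" "c < t q" for q
    using le_F that unfolding F_def by auto
  have "E \<inter> {c..<s} \<subseteq> {c}"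
  proof
    fix \<tau> assume \<tau>: "\<tau> \<in> E \<inter> {c..<s}"
    have "s \<le> t N" using after assms by simp
    then have "\<tau> \<notin> F" using le_F \<tau> by force
    then show "\<tau> \<in> {c}" using \<tau> \<open>s \<le> t N\<close> unfolding F_def by auto
  qed
  then have "ancestor q c = jump c (ancestor q s)"
    if "1 \<le> q" "q \<le> N" "c < t q" for q
    using ancestor_split[of c s q] after[OF that] \<open>c < s\<close> lineage_single_event by simp
  then show ?thesis using that \<open>c < s\<close> after by blast
qed

lemma attach_distinct:
  assumes "2 \<le> j" "j < j'"
  shows "att j \<noteq> att j'"
proof
  assume eq: "att j = att j'"
  define c where "c = att j"
  have "2 \<le> j'" using assms by simp
  obtain w where w: "1 \<le> w" "w < j" "c \<le> t w" "ancestor j c = ancestor w c"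
    using meets_attach[OF assms(1)] unfolding meets_def c_def by blast
  obtain w' where w': "1 \<le> w'" "w' < j'" "c \<le> t w'" "ancestor j' c = ancestor w' c"
    using meets_attach[OF \<open>2 \<le> j'\<close>] eq unfolding meets_def c_def by auto
  have "c < t j" unfolding c_def using attach_less[of j j] assms by simp
  have "c < t j'" unfolding c_def eq using attach_less[of j' j'] assms by simp
  obtain s where "c < s" and after: "\<And>q. 1 \<le> q \<Longrightarrow> q \<le> j' \<Longrightarrow> c < t q \<Longrightarrow> s \<le> t q"
    and jump: "\<And>q. 1 \<le> q \<Longrightarrow> q \<le> j' \<Longrightarrow> c < t q \<Longrightarrow> ancestor q c = jump c (ancestor q s)"
    using ancestors_just_after[of j' c] \<open>c < t j'\<close> \<open>2 \<le> j'\<close> by auto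
  have apart: "ancestor p s \<noteq> ancestor q s" if "p = j \<or> p = j'" "1 \<le> q" "q < p" "c < t q" for p q
    using ancestor_ne_after_attach[of p s q] that after[of q] \<open>c < s\<close> assms eq
    unfolding c_def by auto
  \<comment> \<open>The event at c, if any, merges only the pair {dth c, bth c}, which cannot produce both
    meetings; without an event nothing merges at c, so both witnesses are the sample taken at c.\<close>
  show False
  proof (cases "c \<in> E")
    case True
    then have "c < t w" "c < t w'" using w w' t_notE by (metis order_le_less)+
    then have "{ancestor j s, ancestor w s} = {dth c, bth c}" "{ancestor j' s, ancestor w' s} = {dth c, bth c}"
      using jump w w' apart \<open>c < t j\<close> \<open>c < t j'\<close> assms
      by (auto intro!: jump_eq_jumpD)
    moreover have "ancestor j' s \<notin> {ancestor j s, ancestor w s}"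
      using apart[of j' j] apart[of j' w] w \<open>c < t j\<close> \<open>c < t w\<close> assms by auto
    ultimately show False by blast
  next
    case False
    then have same: "ancestor q c = ancestor q s" if "1 \<le> q" "q \<le> j'" "c < t q" for q
      using jump that by (simp add: jump_def)
    have "t w = c"
      using apart[of j w] same[of j] same[of w] w \<open>c < t j\<close> assms by force
    moreover have "t w' = c"
      using apart[of j' w'] same[of j'] same[of w'] w' \<open>c < t j'\<close> by force
    ultimately have "w = w'" using t_eq_iff w w' by metis
    then show False
      using apart[of j' j] same[of j] same[of j'] w w' \<open>c < t j\<close> \<open>c < t j'\<close> assms by force
  qed
qed

definition alive :: "nat \<Rightarrow> nat \<Rightarrow> bool" where
  "alive i j \<longleftrightarrow> (\<forall>r. i < r \<and> r \<le> j \<longrightarrow> att r \<noteq> t i)"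

lemma lives_eq: "lives j = t ` {i \<in> {1..j}. alive i j}"
  unfolding live_def alive_def by auto

lemma alive_Suc: "i \<le> j \<Longrightarrow> alive i (Suc j) \<longleftrightarrow> alive i j \<and> att (Suc j) \<noteq> t i"
  unfolding alive_def by (metis le_Suc_eq le_imp_less_Suc)

lemma lives_Suc: "lives (Suc j) = insert (t (Suc j)) (lives j - {att (Suc j)})"
proof -
  have "{i \<in> {1..Suc j}. alive i (Suc j)} = insert (Suc j) {i \<in> {1..j}. alive i j \<and> att (Suc j) \<noteq> t i}"
  proof -
    have "alive (Suc j) (Suc j)" unfolding alive_def by simp
    then show ?thesis using alive_Suc by (auto simp: le_Suc_eq)
  qed
  moreover have "t ` {i \<in> {1..j}. alive i j \<and> att (Suc j) \<noteq> t i} = t ` {i \<in> {1..j}. alive i j} - {att (Suc j)}"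
    by auto
  ultimately show ?thesis unfolding lives_eq by simp
qed

lemma branches_eq: "branches j = att ` {p \<in> {2..j}. \<not> is_sample_time t (att p)}"
  unfolding branch_pts_def by auto

lemma branches_Suc:
  assumes "1 \<le> j"
  shows "branches (Suc j) =
     (if is_sample_time t (att (Suc j)) then branches j else insert (att (Suc j)) (branches j))"
proof -
  have "{p \<in> {2..Suc j}. \<not> is_sample_time t (att p)} =
     (if is_sample_time t (att (Suc j)) then {p \<in> {2..j}. \<not> is_sample_time t (att p)}
      else insert (Suc j) {p \<in> {2..j}. \<not> is_sample_time t (att p)})"
    using assms by (auto simp: le_Suc_eq)
  then show ?thesis unfolding branches_eq by simp
qed

lemma attach_in_lives:
  assumes "1 \<le> j" "is_sample_time t (att (Suc j))"
  shows "att (Suc j) \<in> lives j"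
proof -
  obtain r where r: "1 \<le> r" "att (Suc j) = t r" using assms(2) unfolding is_sample_time_def by auto
  have "r \<le> j" using attach_le[of "Suc j"] assms(1) t_le_iff r by simp
  moreover have "alive r j" unfolding alive_def
  proof (intro allI impI)
    fix r' assume "r < r' \<and> r' \<le> j"
    then show "att r' \<noteq> t r" using attach_distinct[of r' "Suc j"] r by simp
  qed
  ultimately show ?thesis unfolding lives_eq using r by auto
qed

lemma attach_notin_branches: "att (Suc j) \<notin> branches j"
proof
  assume "att (Suc j) \<in> branches j"
  then obtain p where "2 \<le> p" "p \<le> j" "att (Suc j) = att p" unfolding branches_eq by auto
  then show False using attach_distinct[of p "Suc j"] by simp
qed

lemma lineages_Suc:
  assumes "1 \<le> j"
  shows "lineages (Suc j) x
    = lineages j x + (if x < t (Suc j) then 1 else 0) - (if x < att (Suc j) then 1 else 0)"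
proof -
  have fin: "finite (lives j)" "finite (branches j)" by (simp_all add: lives_eq branches_eq)
  have new: "t (Suc j) \<notin> lives j" using t_eq_iff unfolding lives_eq by force
  show ?thesis
  proof (cases "is_sample_time t (att (Suc j))")
    case True
    then have "int (card {e \<in> lives (Suc j). x < e}) = int (card {e \<in> lives j. x < e})
        + (if x < t (Suc j) then 1 else 0) - (if x < att (Suc j) then 1 else 0)"
      unfolding lives_Suc
      using attach_in_lives[OF assms] card_above_insert[of "lives j - {att (Suc j)}" "t (Suc j)"]
        card_above_remove[OF fin(1)] fin new
      by simp
    moreover have "branches (Suc j) = branches j" using branches_Suc[OF assms] True by simp
    ultimately show ?thesis unfolding ell_def by simp
  next
    case False
    then have "att (Suc j) \<notin> lives j" unfolding lives_eq is_sample_time_def by auto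
    then have "lives (Suc j) = insert (t (Suc j)) (lives j)" unfolding lives_Suc by simp
    then have "int (card {e \<in> lives (Suc j). x < e})
        = int (card {e \<in> lives j. x < e}) + (if x < t (Suc j) then 1 else 0)"
      using card_above_insert[OF fin(1) new] by simp
    moreover have "int (card {e \<in> branches (Suc j). x < e})
        = int (card {e \<in> branches j. x < e}) + (if x < att (Suc j) then 1 else 0)"
      using branches_Suc[OF assms] False card_above_insert[OF fin(2) attach_notin_branches] by simp
    ultimately show ?thesis unfolding ell_def by simp
  qed
qed

lemma lineages_eq:
  "1 \<le> j \<Longrightarrow> lineages j x = (if x < t 1 then 1 else 0) + int (card {p \<in> {2..j}. att p \<le> x \<and> x < t p})"
proof (induction j rule: dec_induct)
  case base
  have "lives 1 = {t 1}" "branches 1 = {}" unfolding live_def branch_pts_def by auto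
  then show ?case unfolding ell_def by (simp add: Collect_conj_eq)
next
  case (step j)
  have "{p \<in> {2..Suc j}. att p \<le> x \<and> x < t p} = {p \<in> {2..j}. att p \<le> x \<and> x < t p}
        \<union> (if att (Suc j) \<le> x \<and> x < t (Suc j) then {Suc j} else {})"
    using step by (auto simp: le_Suc_eq)
  moreover have "att (Suc j) < t (Suc j)" using attach_less step by simp
  ultimately show ?case using step lineages_Suc by auto
qed

lemma inj_on_ancestor_at_sample:
  assumes "1 \<le> i"
  shows "inj_on (\<lambda>p. ancestor p (t i)) (insert i {p. i < p \<and> att p < t i})"
proof (rule linorder_inj_onI')
  fix p q assume p: "p \<in> insert i {p. i < p \<and> att p < t i}"
    and q: "q \<in> insert i {p. i < p \<and> att p < t i}" and "p < q"
  then have q2: "2 \<le> q" "att q < t i" and "i \<le> p" using assms by auto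
  show "ancestor p (t i) \<noteq> ancestor q (t i)"
  proof
    assume "ancestor p (t i) = ancestor q (t i)"
    moreover have "1 \<le> p" "t i \<le> t p" using \<open>i \<le> p\<close> t_le_iff[of i p] assms by auto
    ultimately have "meets_at q (t i)"
      unfolding meets_def using \<open>p < q\<close> by metis
    then show False using meets_le_attach[OF q2(1)] q2(2) by fastforce
  qed
qed

lemma card_attached_before_less:
  assumes "1 \<le> i" "finite S" "S \<subseteq> {p. i < p \<and> att p < t i}"
  shows "card S < n"
proof -
  have "inj_on (\<lambda>p. ancestor p (t i)) (insert i S)"
    using inj_on_ancestor_at_sample[OF assms(1)] by (rule inj_on_subset) (use assms(3) in auto)
  moreover have "(\<lambda>p. ancestor p (t i)) ` insert i S \<subseteq> {..<n}"
    using assms(1,3) by (auto intro!: ancestor_less)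
  ultimately have "card (insert i S) \<le> card {..<n::nat}" by (rule card_inj_on_le) simp
  moreover have "i \<notin> S" using assms(3) by auto
  ultimately show ?thesis using assms(2) by simp
qed

definition left_attachers :: "nat \<Rightarrow> nat \<Rightarrow> nat set" where
  "left_attachers i k = {p. i < p \<and> p \<le> k \<and> att p < t i \<and> (\<forall>r. 2 \<le> r \<and> r < p \<longrightarrow> att r \<noteq> t i)}"

lemma Suc_in_left_attachers_iff:
  assumes "1 \<le> i" "j < k"
  shows "Suc j \<in> left_attachers i k \<longleftrightarrow> i \<le> j \<and> alive i j \<and> att (Suc j) < t i"
proof -
  have "(\<forall>r. 2 \<le> r \<and> r < Suc j \<longrightarrow> att r \<noteq> t i) \<longleftrightarrow> alive i j"
    unfolding alive_def less_Suc_eq_le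
  proof (intro iffI allI impI)
    fix r assume all: "\<forall>r. 2 \<le> r \<and> r \<le> j \<longrightarrow> att r \<noteq> t i" and r: "i < r \<and> r \<le> j"
    then have "2 \<le> r" using assms(1) by simp
    then show "att r \<noteq> t i" using all r by blast
  next
    fix r assume all: "\<forall>r. i < r \<and> r \<le> j \<longrightarrow> att r \<noteq> t i" and r: "2 \<le> r \<and> r \<le> j"
    show "att r \<noteq> t i"
    proof (cases "r \<le> i")
      case True
      then show ?thesis using attach_less[of r i] r by simp
    qed (use all r in auto)
  qed
  then show ?thesis unfolding left_attachers_def using assms(2) by auto
qed

lemma lineages_at_sample:
  assumes "1 \<le> i" "p \<in> left_attachers i k"
  shows "lineages (p - 1) (t i) = int (card {q \<in> left_attachers i k. q < p})"
proof -
  have "p \<ge> 2" using assms unfolding left_attachers_def by auto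
  have "{q \<in> {2..p - 1}. att q \<le> t i \<and> t i < t q} = {q \<in> left_attachers i k. q < p}"
  proof (intro set_eqI iffI)
    fix q assume q: "q \<in> {q \<in> {2..p - 1}. att q \<le> t i \<and> t i < t q}"
    then have "i < q" using t_less_iff[of i q] assms(1) by auto
    moreover have "att q \<noteq> t i" using q assms(2) unfolding left_attachers_def by auto
    ultimately show "q \<in> {q \<in> left_attachers i k. q < p}"
      using q assms(2) unfolding left_attachers_def by auto
  next
    fix q assume "q \<in> {q \<in> left_attachers i k. q < p}"
    then show "q \<in> {q \<in> {2..p - 1}. att q \<le> t i \<and> t i < t q}"
      using t_less[of i q] assms(1) unfolding left_attachers_def by auto
  qed
  moreover have "\<not> t i < t 1" using t_le_iff[of 1 i] assms(1) by simp
  ultimately show ?thesis using lineages_eq[of "p - 1" "t i"] \<open>p \<ge> 2\<close> by simp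
qed

lemma sum_left_attachers:
  assumes "1 \<le> i"
  shows "(\<Sum>j=1..k-1. if i \<le> j \<and> alive i j \<and> att (Suc j) < t i then f (lineages j (t i)) else 0)
       = (\<Sum>c<card (left_attachers i k). f (int c))"
proof -
  let ?A = "left_attachers i k"
  have "(\<Sum>j=1..k-1. if i \<le> j \<and> alive i j \<and> att (Suc j) < t i then f (lineages j (t i)) else 0)
      = (\<Sum>j=1..k-1. if Suc j \<in> ?A then f (lineages (Suc j - 1) (t i)) else 0)"
    using Suc_in_left_attachers_iff[OF assms] by (intro sum.cong) auto
  also have "\<dots> = (\<Sum>p\<in>Suc ` {1..k-1}. if p \<in> ?A then f (lineages (p - 1) (t i)) else 0)"
    by (subst sum.reindex) auto
  also have "\<dots> = (\<Sum>p\<in>Suc ` {1..k-1} \<inter> ?A. f (lineages (p - 1) (t i)))"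
    by (rule sum.inter_restrict[symmetric]) simp
  also have "Suc ` {1..k-1} \<inter> ?A = ?A"
    using assms by (auto simp: image_Suc_atLeastAtMost left_attachers_def)
  also have "(\<Sum>p\<in>?A. f (lineages (p - 1) (t i))) = (\<Sum>p\<in>?A. f (int (card {q \<in> ?A. q < p})))"
    using lineages_at_sample[OF assms] by simp
  also have "\<dots> = (\<Sum>c<card ?A. f (int c))"
    by (rule sum_rank) (simp add: left_attachers_def)
  finally show ?thesis .
qed

lemma sum_lives_by_sample:
  "(\<Sum>j=1..K. \<Sum>e\<in>lives j. g j e) = (\<Sum>i=1..K. \<Sum>j=1..K. if i \<le> j \<and> alive i j then g j (t i) else 0)"
proof -
  have "(\<Sum>e\<in>lives j. g j e) = (\<Sum>i=1..K. if i \<le> j \<and> alive i j then g j (t i) else 0)"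
    if "j \<le> K" for j
  proof -
    have "inj_on t {i \<in> {1..j}. alive i j}" by (rule inj_onI) (use t_eq_iff in auto)
    then have "(\<Sum>e\<in>lives j. g j e) = (\<Sum>i\<in>{i \<in> {1..j}. alive i j}. g j (t i))"
      unfolding lives_eq by (simp add: sum.reindex)
    also have "{i \<in> {1..j}. alive i j} = {1..K} \<inter> {i. i \<le> j \<and> alive i j}" using that by auto
    finally show ?thesis by (simp add: sum.inter_restrict)
  qed
  then have "(\<Sum>j=1..K. \<Sum>e\<in>lives j. g j e)
      = (\<Sum>j=1..K. \<Sum>i=1..K. if i \<le> j \<and> alive i j then g j (t i) else 0)"
    by simp
  also have "\<dots> = (\<Sum>i=1..K. \<Sum>j=1..K. if i \<le> j \<and> alive i j then g j (t i) else 0)"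
    by (rule sum.swap)
  finally show ?thesis .
qed

lemma mcount_eq_card_left_attachers: "mcount E dth bth t sig i k = card (left_attachers i k)"
  unfolding mcount_def left_attachers_def by simp

lemma sum_live_ln_ratio_eq:
  "(\<Sum>j=1..k-1. \<Sum>e\<in>lives j.
      (if e > att (Suc j)
       then ln ((real n - of_int (lineages j e)) / (real n - of_int (lineages j e) - 1))
       else 0))
   = (\<Sum>i=1..k-1. ln (real n / (real n - real (mcount E dth bth t sig i k))))"
proof -
  define f where "f y = ln ((real n - of_int y) / (real n - of_int y - 1))" for y :: int
  have "(\<Sum>j=1..k-1. \<Sum>e\<in>lives j. if e > att (Suc j) then f (lineages j e) else 0)
      = (\<Sum>i=1..k-1. \<Sum>j=1..k-1. if i \<le> j \<and> alive i j
           then (if t i > att (Suc j) then f (lineages j (t i)) else 0) else 0)"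
    by (rule sum_lives_by_sample)
  also have "\<dots> = (\<Sum>i=1..k-1. \<Sum>j=1..k-1.
      if i \<le> j \<and> alive i j \<and> att (Suc j) < t i then f (lineages j (t i)) else 0)"
    by (intro sum.cong) auto
  also have "\<dots> = (\<Sum>i=1..k-1. \<Sum>c<card (left_attachers i k). f (int c))"
    by (rule sum.cong[OF refl], rule sum_left_attachers) simp
  also have "\<dots> = (\<Sum>i=1..k-1. ln (real n / (real n - real (card (left_attachers i k)))))"
  proof (intro sum.cong refl)
    fix i assume "i \<in> {1..k-1}"
    then have "card (left_attachers i k) < n"
      by (intro card_attached_before_less)
        (auto simp: left_attachers_def intro: finite_subset[of _ "{..k}"])
    then show "(\<Sum>c<card (left_attachers i k). f (int c))
        = ln (real n / (real n - real (card (left_attachers i k))))"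
      unfolding f_def by (simp add: sum_ln_ratio_telescope)
  qed
  finally show ?thesis unfolding f_def mcount_eq_card_left_attachers .
qed

end

theorem lemma4:
  fixes n :: nat and t :: "nat \<Rightarrow> real" and E :: "real set"
    and dth bth :: "real \<Rightarrow> nat" and sig :: "nat \<Rightarrow> nat" and k :: nat
  assumes t_incr: "\<forall>i\<ge>1. t i < t (Suc i)"
    and E_locfin: "\<forall>a b. finite (E \<inter> {a..b})"
    and E_pairs: "\<forall>\<tau>\<in>E. dth \<tau> < n \<and> bth \<tau> < n \<and> dth \<tau> \<noteq> bth \<tau>"
    and sig_ok: "\<forall>i\<ge>1. sig i < n"
    and t_notE: "\<forall>i\<ge>1. t i \<notin> E"
    and attach_ex: "\<forall>j\<ge>2. \<exists>s. meets E dth bth t sig j s"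
    and k: "2 \<le> k"
  shows "(\<Sum>j=1..k-1. \<Sum>e\<in>live E dth bth t sig j.
            (if e > attach E dth bth t sig (Suc j)
             then ln ((real n - of_int (ell E dth bth t sig j e))
                      / (real n - of_int (ell E dth bth t sig j e) - 1))
             else 0))
       = (\<Sum>j=1..k-1. ln (real n / (real n - real (mcount E dth bth t sig j k))))"
proof -
  interpret sampled_moran n t E dth bth sig
    using t_incr E_locfin E_pairs sig_ok t_notE attach_ex by unfold_locales
  show ?thesis by (rule sum_live_ln_ratio_eq)
qed

end
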